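(* Let $q\in\mathbb{C}^\times$ with $q^2\ne\pm1$, $n\ge2$, $\mathbf{Q}\in\mathbb{C}^{n-1}$. Then the algebra $U_q(\mathfrak{sl}_n^{\langle\mathbf{Q}\rangle}[x])$ is generated by the elements $X^{\pm}_{i,0}$, $J_{i,1}$, $K_i^{\pm}$ for $i\in\{1,\dots,n-1\}$.
   Context: Let $I=\{1,\dots,n-1\}$, $(a_{ij})$ the Cartan matrix of type $A_{n-1}$, $[k]=(q^k-q^{-k})/(q-q^{-1})$, $[x,y]=xy-yx$. For $\mathbf{Q}=(Q_1,\dots,Q_{n-1})$, $U_q(\mathfrak{sl}_n^{\langle\mathbf{Q}\rangle}[x])$ is the $\mathbb{C}$-algebra with generators $X^{\pm}_{i,t},J_{i,t},K_i^{\pm}$ ($i\in I,t\ge0$) and relations: all $K_i^+$, $J_{j,t}$ pairwise commute; $K_i^+K_i^-=1=K_i^-K_i^+$; $(K_i^-)^2=1-(q-q^{-1})J_{i,0}$; $X^{\pm}_{i,t+1}X^{\pm}_{j,s}-q^{\pm a_{ij}}X^{\pm}_{j,s}X^{\pm}_{i,t+1}=q^{\pm a_{ij}}X^{\pm}_{i,t}X^{\pm}_{j,s+1}-X^{\pm}_{j,s+1}X^{\pm}_{i,t}$; $K_i^+X^{\pm}_{j,t}K_i^-=q^{\pm a_{ij}}X^{\pm}_{j,t}$; $q^{\pm a_{ij}}J_{i,0}X^{\pm}_{j,t}-q^{\mp a_{ij}}X^{\pm}_{j,t}J_{i,0}=[\pm a_{ij}]X^{\pm}_{j,t}$; $[J_{i,s+1},X^{\pm}_{j,t}]=q^{\pm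 a_{ij}}J_{i,s}X^{\pm}_{j,t+1}-q^{\mp a_{ij}}X^{\pm}_{j,t+1}J_{i,s}$; $[X^+_{i,t},X^-_{j,s}]=\delta_{ij}K_i^+(J_{i,s+t}-Q_iJ_{i,s+t+1})$; $[X^\pm_{i,t},X^\pm_{j,s}]=0$ if $j\ne i,i\pm1$; $X^{\pm}_{i\pm1,u}(X^{\pm}_{i,s}X^{\pm}_{i,t}+X^{\pm}_{i,t}X^{\pm}_{i,s})+(X^{\pm}_{i,s}X^{\pm}_{i,t}+X^{\pm}_{i,t}X^{\pm}_{i,s})X^{\pm}_{i\pm1,u}=(q+q^{-1})(X^{\pm}_{i,s}X^{\pm}_{i\pm1,u}X^{\pm}_{i,t}+X^{\pm}_{i,t}X^{\pm}_{i\pm1,u}X^{\pm}_{i,s})$. *)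

theory Defs
  imports Complex_Main
begin

definition cartanA :: "nat \<Rightarrow> nat \<Rightarrow> int" where
  "cartanA i j = (if i = j then 2 else if i = j + 1 \<or> j = i + 1 then -1 else 0)"

definition qint :: "complex \<Rightarrow> int \<Rightarrow> complex" where
  "qint q k = (q powi k - q powi (-k)) / (q - inverse q)"

text \<open>A (unital, associative) complex algebra: a ring 'a together with a
  ring homomorphism sc from the complex numbers into the centre of 'a.\<close>
definition is_calg :: "(complex \<Rightarrow> 'a::ring_1) \<Rightarrow> bool" where
  "is_calg sc \<longleftrightarrow> sc 1 = 1 \<and> (\<forall>a b. sc (a + b) = sc a + sc b)
     \<and> (\<forall>a b. sc (a * b) = sc a * sc b) \<and> (\<forall>a x. sc a * x = x * sc a)"

inductive_set subalg :: "(complex \<Rightarrow> 'a::ring_1) \<Rightarrow> 'a set \<Rightarrow> 'a set"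
  for sc :: "complex \<Rightarrow> 'a" and S :: "'a set" where
  gen: "x \<in> S \<Longrightarrow> x \<in> subalg sc S"
| scal: "sc c \<in> subalg sc S"
| add: "x \<in> subalg sc S \<Longrightarrow> y \<in> subalg sc S \<Longrightarrow> x + y \<in> subalg sc S"
| mult: "x \<in> subalg sc S \<Longrightarrow> y \<in> subalg sc S \<Longrightarrow> x * y \<in> subalg sc S"

text \<open>Sign-dependent generators: e = True stands for +, e = False for -.\<close>
definition sgn_pm :: "bool \<Rightarrow> int" where
  "sgn_pm e = (if e then 1 else -1)"

definition Xpm :: "bool \<Rightarrow> (nat \<Rightarrow> nat \<Rightarrow> 'a) \<Rightarrow> (nat \<Rightarrow> nat \<Rightarrow> 'a) \<Rightarrow> nat \<Rightarrow> nat \<Rightarrow> 'a" where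
  "Xpm e Xp Xm = (if e then Xp else Xm)"

text \<open>The defining relations of U_q(sl_n^<Q>[x]), for elements
  Xp i t = X^+_{i,t}, Xm i t = X^-_{i,t}, J i t = J_{i,t}, Kp i = K_i^+, Km i = K_i^-
  of a complex algebra (indices i in {1..n-1}, t >= 0).\<close>
definition usl_rels ::
  "(complex \<Rightarrow> 'a::ring_1) \<Rightarrow> complex \<Rightarrow> nat \<Rightarrow> (nat \<Rightarrow> complex) \<Rightarrow>
   (nat \<Rightarrow> nat \<Rightarrow> 'a) \<Rightarrow> (nat \<Rightarrow> nat \<Rightarrow> 'a) \<Rightarrow> (nat \<Rightarrow> nat \<Rightarrow> 'a) \<Rightarrow>
   (nat \<Rightarrow> 'a) \<Rightarrow> (nat \<Rightarrow> 'a) \<Rightarrow> bool" where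
  "usl_rels sc q n Q Xp Xm J Kp Km \<longleftrightarrow>
   (let I = {1..n-1}; a = cartanA; X = (\<lambda>e. Xpm e Xp Xm) in
   (\<forall>i\<in>I. \<forall>j\<in>I. Kp i * Kp j = Kp j * Kp i) \<and>
   (\<forall>i\<in>I. \<forall>j\<in>I. \<forall>t. Kp i * J j t = J j t * Kp i) \<and>
   (\<forall>i\<in>I. \<forall>j\<in>I. \<forall>s t. J i s * J j t = J j t * J i s) \<and>
   (\<forall>i\<in>I. Kp i * Km i = 1 \<and> Km i * Kp i = 1) \<and>
   (\<forall>i\<in>I. (Km i)^2 = 1 - sc (q - inverse q) * J i 0) \<and>
   (\<forall>e. \<forall>i\<in>I. \<forall>j\<in>I. \<forall>t s.
      X e i (t+1) * X e j s - sc (q powi (sgn_pm e * a i j)) * X e j s * X e i (t+1)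
      = sc (q powi (sgn_pm e * a i j)) * X e i t * X e j (s+1) - X e j (s+1) * X e i t) \<and>
   (\<forall>e. \<forall>i\<in>I. \<forall>j\<in>I. \<forall>t.
      Kp i * X e j t * Km i = sc (q powi (sgn_pm e * a i j)) * X e j t) \<and>
   (\<forall>e. \<forall>i\<in>I. \<forall>j\<in>I. \<forall>t.
      sc (q powi (sgn_pm e * a i j)) * J i 0 * X e j t
        - sc (q powi (- sgn_pm e * a i j)) * X e j t * J i 0
      = sc (qint q (sgn_pm e * a i j)) * X e j t) \<and>
   (\<forall>e. \<forall>i\<in>I. \<forall>j\<in>I. \<forall>s t.
      J i (s+1) * X e j t - X e j t * J i (s+1)
      = sc (q powi (sgn_pm e * a i j)) * J i s * X e j (t+1)
        - sc (q powi (- sgn_pm e * a i j)) * X e j (t+1) * J i s) \<and>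
   (\<forall>i\<in>I. \<forall>j\<in>I. \<forall>t s.
      Xp i t * Xm j s - Xm j s * Xp i t
      = (if i = j then Kp i * (J i (s+t) - sc (Q i) * J i (s+t+1)) else 0)) \<and>
   (\<forall>e. \<forall>i\<in>I. \<forall>j\<in>I. \<forall>t s. j \<noteq> i \<and> j \<noteq> i + 1 \<and> j + 1 \<noteq> i \<longrightarrow>
      X e i t * X e j s - X e j s * X e i t = 0) \<and>
   (\<forall>e. \<forall>i\<in>I. \<forall>j\<in>I. \<forall>s t u. (j = i + 1 \<or> j + 1 = i) \<longrightarrow>
      X e j u * (X e i s * X e i t + X e i t * X e i s)
        + (X e i s * X e i t + X e i t * X e i s) * X e j u
      = sc (q + inverse q) * (X e i s * X e j u * X e i t + X e i t * X e j u * X e i s)))"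

end

theory Submission
  imports Defs
begin

text \<open>
  Since q - q^-1 is invertible, the relation for the square of K_i^- expresses J_{i,0}
  through K_i^-. The relation [J_{i,1}, X^\<plusminus>_{i,t}] = [\<plusminus>2] X^\<plusminus>_{i,t+1}, where
  [\<plusminus>2] = \<plusminus>(q + q^-1) is nonzero because q^2 \<noteq> -1, produces all X^\<plusminus>_{i,t} from
  X^\<plusminus>_{i,0}. Finally K_i^- [X^+_{i,t}, X^-_{i,0}] = J_{i,t} - Q_i J_{i,t+1} produces every
  J_{i,t}: directly if Q_i = 0, and by induction on t starting from J_{i,0} otherwise.
\<close>

lemma qint_uminus: "qint q (- k) = - qint q k"
  by (simp add: qint_def minus_divide_left)

lemma qint_two:
  assumes "q \<noteq> 0" "q\<^sup>2 \<noteq> 1"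
  shows "qint q 2 = q + inverse q"
proof -
  have "q - inverse q \<noteq> 0"
    using assms by (auto simp: field_simps power2_eq_square)
  moreover have "q\<^sup>2 - inverse (q\<^sup>2) = (q + inverse q) * (q - inverse q)"
    using assms(1) by (simp add: field_simps power2_eq_square)
  ultimately show ?thesis
    by (simp add: qint_def power_int_minus)
qed

lemma qint_two_nonzero:
  assumes "q \<noteq> 0" "q\<^sup>2 \<noteq> 1" "q\<^sup>2 \<noteq> -1"
  shows "qint q 2 \<noteq> 0"
proof -
  have "q + inverse q \<noteq> 0"
  proof
    assume "q + inverse q = 0"
    then have "q * q + 1 = 0"
      using assms(1) by (simp add: field_simps)
    then have "q\<^sup>2 = -1"
      by (simp add: power2_eq_square eq_neg_iff_add_eq_0)
    with assms(3) show False
      by contradiction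
  qed
  with qint_two[OF assms(1,2)] show ?thesis
    by simp
qed

lemma is_calg_scalar_simps:
  assumes "is_calg sc"
  shows "sc 0 = 0" "sc 1 = 1" "sc (- a) = - sc a"
    "sc (a + b) = sc a + sc b" "sc (a * b) = sc a * sc b"
proof -
  show "sc 1 = 1" "sc (a + b) = sc a + sc b" "sc (a * b) = sc a * sc b"
    using assms unfolding is_calg_def by blast+
  have "sc (0 + 0) = sc 0 + sc 0"
    using assms unfolding is_calg_def by blast
  then show zero: "sc 0 = 0"
    by simp
  have "sc (- a + a) = sc (- a) + sc a"
    using assms unfolding is_calg_def by blast
  then show "sc (- a) = - sc a"
    using zero by (simp add: eq_neg_iff_add_eq_0)
qed

lemma subalg_one:
  assumes "is_calg sc"
  shows "1 \<in> subalg sc S"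
  using subalg.scal[of sc 1 S] is_calg_scalar_simps[OF assms] by simp

lemma subalg_smult:
  "x \<in> subalg sc S \<Longrightarrow> sc c * x \<in> subalg sc S"
  by (simp add: subalg.mult subalg.scal)

lemma subalg_smult_cancel:
  assumes "is_calg sc" "c \<noteq> 0" "sc c * x \<in> subalg sc S"
  shows "x \<in> subalg sc S"
proof -
  have "sc (inverse c) * (sc c * x) = sc (inverse c * c) * x"
    using is_calg_scalar_simps[OF assms(1)] by (simp add: mult.assoc)
  also have "\<dots> = x"
    using assms(2) is_calg_scalar_simps[OF assms(1)] by simp
  finally show ?thesis
    using subalg_smult[OF assms(3)] by metis
qed

lemma subalg_diff:
  assumes "is_calg sc" "x \<in> subalg sc S" "y \<in> subalg sc S"
  shows "x - y \<in> subalg sc S"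
proof -
  have "x - y = x + sc (-1) * y"
    using is_calg_scalar_simps[OF assms(1)] by simp
  also have "\<dots> \<in> subalg sc S"
    using assms(2,3) by (intro subalg.add subalg_smult)
  finally show ?thesis .
qed

lemma subalg_commutator:
  assumes "is_calg sc" "x \<in> subalg sc S" "y \<in> subalg sc S"
  shows "x * y - y * x \<in> subalg sc S"
  using assms by (simp add: subalg_diff subalg.mult)

locale usl_algebra =
  fixes sc :: "complex \<Rightarrow> 'a::ring_1"
    and q :: complex and n :: nat and Q :: "nat \<Rightarrow> complex"
    and Xp Xm J :: "nat \<Rightarrow> nat \<Rightarrow> 'a" and Kp Km :: "nat \<Rightarrow> 'a"
  assumes calg: "is_calg sc"
    and rels: "usl_rels sc q n Q Xp Xm J Kp Km"
begin

abbreviation X :: "bool \<Rightarrow> nat \<Rightarrow> nat \<Rightarrow> 'a" where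
  "X e \<equiv> Xpm e Xp Xm"

lemma Kp_Km_inverse:
  "\<forall>i\<in>{1..n-1}. Kp i * Km i = 1 \<and> Km i * Kp i = 1"
  using rels unfolding usl_rels_def Let_def by (elim conjE) assumption

lemma Km_square:
  "\<forall>i\<in>{1..n-1}. (Km i)\<^sup>2 = 1 - sc (q - inverse q) * J i 0"
  using rels unfolding usl_rels_def Let_def by (elim conjE) assumption

lemma J_zero_X_relation:
  "\<forall>e. \<forall>i\<in>{1..n-1}. \<forall>j\<in>{1..n-1}. \<forall>t.
      sc (q powi (sgn_pm e * cartanA i j)) * J i 0 * X e j t
        - sc (q powi (- sgn_pm e * cartanA i j)) * X e j t * J i 0
      = sc (qint q (sgn_pm e * cartanA i j)) * X e j t"
  using rels unfolding usl_rels_def Let_def by (elim conjE) assumption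

lemma J_X_relation:
  "\<forall>e. \<forall>i\<in>{1..n-1}. \<forall>j\<in>{1..n-1}. \<forall>s t.
      J i (s+1) * X e j t - X e j t * J i (s+1)
      = sc (q powi (sgn_pm e * cartanA i j)) * J i s * X e j (t+1)
        - sc (q powi (- sgn_pm e * cartanA i j)) * X e j (t+1) * J i s"
  using rels unfolding usl_rels_def Let_def by (elim conjE) assumption

lemma Xp_Xm_relation:
  "\<forall>i\<in>{1..n-1}. \<forall>j\<in>{1..n-1}. \<forall>t s.
      Xp i t * Xm j s - Xm j s * Xp i t
      = (if i = j then Kp i * (J i (s+t) - sc (Q i) * J i (s+t+1)) else 0)"
  using rels unfolding usl_rels_def Let_def by (elim conjE) assumption

lemma J_X_commutator:
  assumes "i \<in> {1..n-1}"
  shows "J i 1 * X e i t - X e i t * J i 1 = sc (qint q (2 * sgn_pm e)) * X e i (t + 1)"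
proof -
  have "J i (0 + 1) * X e i t - X e i t * J i (0 + 1)
      = sc (q powi (sgn_pm e * cartanA i i)) * J i 0 * X e i (t + 1)
        - sc (q powi (- sgn_pm e * cartanA i i)) * X e i (t + 1) * J i 0"
    using J_X_relation assms by blast
  also have "\<dots> = sc (qint q (sgn_pm e * cartanA i i)) * X e i (t + 1)"
    using J_zero_X_relation assms by blast
  finally show ?thesis
    by (simp add: cartanA_def mult.commute)
qed

lemma Km_Xp_Xm_commutator:
  assumes "i \<in> {1..n-1}"
  shows "Km i * (Xp i t * Xm i 0 - Xm i 0 * Xp i t) = J i t - sc (Q i) * J i (t + 1)"
proof -
  have "Xp i t * Xm i 0 - Xm i 0 * Xp i t = Kp i * (J i t - sc (Q i) * J i (t + 1))"
    using Xp_Xm_relation assms by simp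
  then show ?thesis
    using Kp_Km_inverse assms by (simp flip: mult.assoc)
qed

context
  fixes i S
  assumes i: "i \<in> {1..n-1}"
    and generators: "{Xp i 0, Xm i 0, J i 1, Kp i, Km i} \<subseteq> subalg sc S"
begin

lemma J_zero_mem_subalg:
  assumes "q \<noteq> 0" "q\<^sup>2 \<noteq> 1"
  shows "J i 0 \<in> subalg sc S"
proof (rule subalg_smult_cancel[OF calg])
  show "q - inverse q \<noteq> 0"
    using assms by (auto simp: field_simps power2_eq_square)
  have "sc (q - inverse q) * J i 0 = 1 - Km i * Km i"
    using Km_square i by (simp add: power2_eq_square)
  also have "\<dots> \<in> subalg sc S"
    using generators by (simp add: subalg_diff subalg_one subalg.mult calg)
  finally show "sc (q - inverse q) * J i 0 \<in> subalg sc S" .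
qed

lemma X_mem_subalg:
  assumes "q \<noteq> 0" "q\<^sup>2 \<noteq> 1" "q\<^sup>2 \<noteq> -1"
  shows "X e i t \<in> subalg sc S"
proof (induction t)
  case 0
  then show ?case
    using generators by (simp add: Xpm_def)
next
  case (Suc t)
  have "qint q (2 * sgn_pm e) \<noteq> 0"
    using qint_two_nonzero[OF assms] by (simp add: sgn_pm_def qint_uminus)
  moreover have "sc (qint q (2 * sgn_pm e)) * X e i (Suc t) \<in> subalg sc S"
    using J_X_commutator[OF i, of e t] generators subalg_commutator[OF calg _ Suc, of "J i 1"]
    by simp
  ultimately show ?case
    by (rule subalg_smult_cancel[OF calg])
qed

lemma J_mem_subalg:
  assumes "q \<noteq> 0" "q\<^sup>2 \<noteq> 1" "q\<^sup>2 \<noteq> -1"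
  shows "J i t \<in> subalg sc S"
proof -
  have commutator_mem: "J i t - sc (Q i) * J i (t + 1) \<in> subalg sc S" for t
  proof -
    have "Xp i t \<in> subalg sc S" "Xm i 0 \<in> subalg sc S"
      using X_mem_subalg[OF assms, of True] X_mem_subalg[OF assms, of False]
      by (simp_all add: Xpm_def)
    then show ?thesis
      using Km_Xp_Xm_commutator[OF i, of t] generators
      by (metis insert_subset subalg.mult subalg_commutator[OF calg])
  qed
  show ?thesis
  proof (cases "Q i = 0")
    case True
    then show ?thesis
      using commutator_mem[of t] is_calg_scalar_simps(1)[OF calg] by simp
  next
    case False
    show ?thesis
    proof (induction t)
      case 0
      show ?case
        using J_zero_mem_subalg[OF assms(1,2)] .
    next
      case (Suc t)
      have "sc (Q i) * J i (t + 1) = J i t - (J i t - sc (Q i) * J i (t + 1))"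
        by simp
      also have "\<dots> \<in> subalg sc S"
        using Suc commutator_mem by (rule subalg_diff[OF calg])
      finally show ?case
        using subalg_smult_cancel[OF calg False] by simp
    qed
  qed
qed

end

end

theorem mainTheorem5:
  fixes sc :: "complex \<Rightarrow> 'a::ring_1"
    and q :: complex and n :: nat and Q :: "nat \<Rightarrow> complex"
    and Xp Xm J :: "nat \<Rightarrow> nat \<Rightarrow> 'a" and Kp Km :: "nat \<Rightarrow> 'a"
  assumes "q \<noteq> 0" and "q^2 \<noteq> 1" and "q^2 \<noteq> -1" and "n \<ge> 2"
    and "is_calg sc"
    and "usl_rels sc q n Q Xp Xm J Kp Km"
  shows "\<forall>i\<in>{1..n-1}. \<forall>t.
           {Xp i t, Xm i t, J i t, Kp i, Km i} \<subseteq>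
           subalg sc ((\<Union>k\<in>{1..n-1}. {Xp k 0, Xm k 0, J k 1, Kp k, Km k}))"
proof (intro ballI allI)
  fix i t
  assume i: "i \<in> {1..n-1}"
  let ?S = "\<Union>k\<in>{1..n-1}. {Xp k 0, Xm k 0, J k 1, Kp k, Km k}"
  interpret usl_algebra sc q n Q Xp Xm J Kp Km
    using assms(5,6) by unfold_locales
  have generators: "{Xp i 0, Xm i 0, J i 1, Kp i, Km i} \<subseteq> subalg sc ?S"
    using i by (auto intro!: subalg.gen)
  note X = X_mem_subalg[OF i generators assms(1-3)]
  show "{Xp i t, Xm i t, J i t, Kp i, Km i} \<subseteq> subalg sc ?S"
    using X[of True t] X[of False t] J_mem_subalg[OF i generators assms(1-3)] generators
    by (simp add: Xpm_def)
qed

end
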